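(* (i) A graph $G$ is $2$-$\chi_\rho$-critical if and only if $G \cong K_2$. (ii) A graph $G$ is $3$-$\chi_\rho$-critical if and only if $G \in \{C_3, P_4\}$ (up to isomorphism).
   Context: Graphs are finite and simple. A $k$-packing coloring of $G$ is a map $c:V(G)\to\{1,\ldots,k\}$ such that two distinct vertices $u,v$ with $c(u)=c(v)=i$ satisfy $d_G(u,v)>i$ (distance between vertices in different components is infinite); $\chi_\rho(G)$ is the smallest $k$ for which such a coloring exists. $G$ is $\chi_\rho$-critical if $\chi_\rho(H)<\chi_\rho(G)$ for every proper subgraph $H$ of $G$, and $k$-$\chi_\rho$-critical if moreover $\chi_\rho(G)=k$. $C_n$ is the cycle and $P_n$ the path on $n$ vertices. *)

theory Defs
  imports Main "HOL-Library.Extended_Nat"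
begin

type_synonym 'a graph = "'a set \<times> 'a set set"

definition verts :: "'a graph \<Rightarrow> 'a set" where "verts G = fst G"
definition edges :: "'a graph \<Rightarrow> 'a set set" where "edges G = snd G"

definition graph :: "'a graph \<Rightarrow> bool" where
  "graph G \<longleftrightarrow> finite (verts G) \<and>
     (\<forall>e\<in>edges G. \<exists>u v. e = {u, v} \<and> u \<noteq> v \<and> u \<in> verts G \<and> v \<in> verts G)"

definition walk :: "'a graph \<Rightarrow> 'a list \<Rightarrow> bool" where
  "walk G p \<longleftrightarrow> p \<noteq> [] \<and> set p \<subseteq> verts G \<and>
     (\<forall>i < length p - 1. {p ! i, p ! Suc i} \<in> edges G)"

text \<open>Distance; infinite (top of enat) if there is no walk.\<close>
definition dist :: "'a graph \<Rightarrow> 'a \<Rightarrow> 'a \<Rightarrow> enat" where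
  "dist G u v = (INF p \<in> {p. walk G p \<and> hd p = u \<and> last p = v}. enat (length p - 1))"

definition packing_coloring :: "'a graph \<Rightarrow> nat \<Rightarrow> ('a \<Rightarrow> nat) \<Rightarrow> bool" where
  "packing_coloring G k c \<longleftrightarrow>
     (\<forall>v\<in>verts G. c v \<in> {1..k}) \<and>
     (\<forall>u\<in>verts G. \<forall>v\<in>verts G. u \<noteq> v \<and> c u = c v \<longrightarrow> dist G u v > enat (c u))"

definition chi_rho :: "'a graph \<Rightarrow> nat" where
  "chi_rho G = (LEAST k. \<exists>c. packing_coloring G k c)"

definition subgraph :: "'a graph \<Rightarrow> 'a graph \<Rightarrow> bool" where
  "subgraph H G \<longleftrightarrow> graph H \<and> verts H \<subseteq> verts G \<and> edges H \<subseteq> edges G"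

definition chi_rho_critical :: "'a graph \<Rightarrow> bool" where
  "chi_rho_critical G \<longleftrightarrow> graph G \<and>
     (\<forall>H. subgraph H G \<and> H \<noteq> G \<longrightarrow> chi_rho H < chi_rho G)"

definition k_chi_rho_critical :: "nat \<Rightarrow> 'a graph \<Rightarrow> bool" where
  "k_chi_rho_critical k G \<longleftrightarrow> chi_rho_critical G \<and> chi_rho G = k"

definition graph_iso :: "'a graph \<Rightarrow> 'b graph \<Rightarrow> bool" where
  "graph_iso G H \<longleftrightarrow> (\<exists>f. bij_betw f (verts G) (verts H) \<and>
     (\<forall>u\<in>verts G. \<forall>v\<in>verts G. {u, v} \<in> edges G \<longleftrightarrow> {f u, f v} \<in> edges H))"

definition K2 :: "nat graph" where "K2 = ({0, 1}, {{0, 1}})"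
definition C3 :: "nat graph" where "C3 = ({0, 1, 2}, {{0, 1}, {1, 2}, {0, 2}})"
definition P4 :: "nat graph" where "P4 = ({0, 1, 2, 3}, {{0, 1}, {1, 2}, {2, 3}})"

end

theory Submission
  imports Defs
begin

(*
  A packing colouring with colours 1 and 2 is a proper colouring in which no two vertices
  of colour 2 have a common neighbour. A triangle has no proper 2-colouring, and along a
  P4 the alternating colours put 2 on both ends of a path of length two; conversely, a
  graph without triangle and P4 is a disjoint union of stars, coloured by giving the
  centres 2. So chi_rho G \<le> 2 iff G contains neither a triangle nor a P4, just as
  chi_rho G \<le> 1 iff G has no edge.

  Hence a 2-critical graph is a minimal graph with an edge, i.e. K2, and a 3-critical graph
  is a minimal graph containing a triangle or a P4, i.e. C3 or P4. Conversely, C3 and P4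
  have three edges and no isolated vertex, so a subgraph that still contains a triangle
  or a P4 is the whole graph.
*)

section \<open>Adjacency and distance\<close>

definition adj :: "'a graph \<Rightarrow> 'a \<Rightarrow> 'a \<Rightarrow> bool" where
  "adj G u v \<longleftrightarrow> {u, v} \<in> edges G"

lemma adj_sym: "adj G u v \<longleftrightarrow> adj G v u"
  by (simp add: adj_def insert_commute)

lemma adj_irrefl: "graph G \<Longrightarrow> \<not> adj G u u"
  unfolding graph_def adj_def by (metis doubleton_eq_iff insert_absorb2)

lemma adj_in_verts: "graph G \<Longrightarrow> adj G u v \<Longrightarrow> u \<in> verts G \<and> v \<in> verts G"
  unfolding graph_def adj_def by (metis doubleton_eq_iff)

lemma walk_Nil [simp]: "\<not> walk G []"
  by (simp add: walk_def)

lemma walk_singleton [simp]: "walk G [x] \<longleftrightarrow> x \<in> verts G"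
  by (simp add: walk_def)

lemma walk_Cons_Cons [simp]:
  "walk G (x # y # p) \<longleftrightarrow> x \<in> verts G \<and> {x, y} \<in> edges G \<and> walk G (y # p)"
  by (auto simp: walk_def less_Suc_eq_0_disj)

lemma dist_le_enat_iff:
  "dist G u v \<le> enat n \<longleftrightarrow> (\<exists>p. walk G p \<and> hd p = u \<and> last p = v \<and> length p \<le> Suc n)"
proof -
  have "dist G u v \<le> enat n \<longleftrightarrow> dist G u v < enat (Suc n)"
    by (cases "dist G u v") auto
  also have "\<dots> \<longleftrightarrow> (\<exists>p. walk G p \<and> hd p = u \<and> last p = v \<and> length p - 1 < Suc n)"
    unfolding dist_def INF_less_iff by auto
  also have "\<dots> \<longleftrightarrow> (\<exists>p. walk G p \<and> hd p = u \<and> last p = v \<and> length p \<le> Suc n)"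
    by (intro ex_cong1) linarith
  finally show ?thesis .
qed

lemma dist_le_1_iff:
  assumes "graph G"
  shows "dist G u v \<le> enat 1 \<longleftrightarrow> u = v \<and> u \<in> verts G \<or> adj G u v"
proof
  assume "dist G u v \<le> enat 1"
  then obtain p where "walk G p" "hd p = u" "last p = v" "length p \<le> 2"
    by (auto simp: dist_le_enat_iff)
  then show "u = v \<and> u \<in> verts G \<or> adj G u v"
    by (cases p rule: remdups_adj.cases) (auto simp: adj_def)
next
  assume "u = v \<and> u \<in> verts G \<or> adj G u v"
  then show "dist G u v \<le> enat 1"
  proof
    assume "u = v \<and> u \<in> verts G"
    then show ?thesis unfolding dist_le_enat_iff by (intro exI[of _ "[u]"]) auto
  next
    assume "adj G u v"
    then show ?thesis using adj_in_verts[OF assms]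
      unfolding dist_le_enat_iff by (intro exI[of _ "[u, v]"]) (auto simp: adj_def)
  qed
qed

lemma dist_le_2_iff:
  assumes "graph G"
  shows "dist G u v \<le> enat 2 \<longleftrightarrow>
    u = v \<and> u \<in> verts G \<or> adj G u v \<or> (\<exists>w. adj G u w \<and> adj G w v)"
proof
  assume "dist G u v \<le> enat 2"
  then obtain p where "walk G p" "hd p = u" "last p = v" "length p \<le> 3"
    by (auto simp: dist_le_enat_iff)
  then show "u = v \<and> u \<in> verts G \<or> adj G u v \<or> (\<exists>w. adj G u w \<and> adj G w v)"
    by (cases p rule: remdups_adj.cases; cases "tl (tl p)") (auto simp: adj_def)
next
  assume "u = v \<and> u \<in> verts G \<or> adj G u v \<or> (\<exists>w. adj G u w \<and> adj G w v)"
  then show "dist G u v \<le> enat 2"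
  proof (elim disjE exE conjE)
    assume "u = v" "u \<in> verts G"
    then show ?thesis unfolding dist_le_enat_iff by (intro exI[of _ "[u]"]) auto
  next
    assume "adj G u v"
    then show ?thesis using adj_in_verts[OF assms]
      unfolding dist_le_enat_iff by (intro exI[of _ "[u, v]"]) (auto simp: adj_def)
  next
    fix w assume "adj G u w" "adj G w v"
    then show ?thesis using adj_in_verts[OF assms]
      unfolding dist_le_enat_iff by (intro exI[of _ "[u, w, v]"]) (auto simp: adj_def)
  qed
qed

section \<open>Packing colourings with one or two colours\<close>

lemma packing_coloring_if_inj:
  assumes "inj_on c (verts G)" "c ` verts G \<subseteq> {1..k}"
  shows "packing_coloring G k c"
  using assms unfolding packing_coloring_def inj_on_def by blast

lemma packing_coloring_exists:
  assumes "graph G"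
  shows "\<exists>k c. packing_coloring G k c"
proof -
  obtain f :: "'a \<Rightarrow> nat" and n where f: "f ` verts G = {i. i < n}" "inj_on f (verts G)"
    using assms finite_imp_inj_to_nat_seg unfolding graph_def by metis
  then have "f v < n" if "v \<in> verts G" for v
    using that by blast
  with f have "packing_coloring G n (\<lambda>v. Suc (f v))"
    by (intro packing_coloring_if_inj) (auto simp: inj_on_def Suc_le_eq)
  then show ?thesis
    by blast
qed

lemma chi_rho_le_iff:
  assumes "graph G"
  shows "chi_rho G \<le> k \<longleftrightarrow> (\<exists>c. packing_coloring G k c)"
proof
  assume "chi_rho G \<le> k"
  moreover obtain c where "packing_coloring G (chi_rho G) c"
    using LeastI_ex[OF packing_coloring_exists[OF assms]] unfolding chi_rho_def by blast
  ultimately have "packing_coloring G k c"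
    unfolding packing_coloring_def by auto
  then show "\<exists>c. packing_coloring G k c" by blast
next
  assume "\<exists>c. packing_coloring G k c"
  then show "chi_rho G \<le> k"
    unfolding chi_rho_def by (rule Least_le)
qed

lemma packing_coloring_adj_neq:
  assumes "graph G" "packing_coloring G k c" "adj G u v"
  shows "c u \<noteq> c v"
proof
  assume same: "c u = c v"
  have "u \<noteq> v"
    using assms(1,3) adj_irrefl by metis
  moreover have "u \<in> verts G" "v \<in> verts G"
    using adj_in_verts[OF assms(1,3)] by simp_all
  ultimately have "enat (c u) < dist G u v" "1 \<le> c u"
    using assms(2) same unfolding packing_coloring_def by auto
  moreover have "dist G u v \<le> enat 1"
    using dist_le_1_iff[OF assms(1)] assms(3) by blast
  ultimately show False
    by (meson enat_ord_simps(1) le_less_trans not_less)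
qed

lemma chi_rho_le_1_iff:
  assumes "graph G"
  shows "chi_rho G \<le> 1 \<longleftrightarrow> edges G = {}"
proof
  assume "chi_rho G \<le> 1"
  then obtain c where c: "packing_coloring G 1 c"
    using chi_rho_le_iff[OF assms] by blast
  show "edges G = {}"
  proof (rule equals0I)
    fix e assume "e \<in> edges G"
    then obtain u v where "e = {u, v}" "u \<in> verts G" "v \<in> verts G"
      using assms unfolding graph_def by blast
    with \<open>e \<in> edges G\<close> have "adj G u v" "c u = 1" "c v = 1"
      using c unfolding adj_def packing_coloring_def by auto
    then show False
      using packing_coloring_adj_neq[OF assms c] by metis
  qed
next
  assume "edges G = {}"
  then have "packing_coloring G 1 (\<lambda>_. 1)"
    using dist_le_1_iff[OF assms] unfolding packing_coloring_def adj_def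
    by (auto simp: not_le[symmetric])
  then show "chi_rho G \<le> 1"
    using chi_rho_le_iff[OF assms] by blast
qed

lemma packing_coloring_2_iff:
  assumes "graph G"
  shows "packing_coloring G 2 c \<longleftrightarrow> (\<forall>v\<in>verts G. c v \<in> {1, 2}) \<and>
    (\<forall>u v. adj G u v \<longrightarrow> c u \<noteq> c v) \<and>
    (\<forall>u v w. u \<noteq> v \<and> adj G u w \<and> adj G w v \<and> c u = 2 \<longrightarrow> c v \<noteq> 2)"
proof -
  have separated: "enat (c u) < dist G u v \<longleftrightarrow>
      \<not> adj G u v \<and> (c u = 2 \<longrightarrow> \<not> (\<exists>w. adj G u w \<and> adj G w v))"
    if "u \<noteq> v" "c u \<in> {1, 2}" for u v
    using that dist_le_1_iff[OF assms, of u v] dist_le_2_iff[OF assms, of u v]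
    by (auto simp: not_less[symmetric] numeral_2_eq_2)
  have two_colours: "c v \<in> {1..2} \<longleftrightarrow> c v \<in> {1, 2}" for v
    by auto
  show ?thesis
  proof (intro iffI conjI allI impI)
    assume c: "packing_coloring G 2 c"
    then show "\<forall>v\<in>verts G. c v \<in> {1, 2}"
      unfolding packing_coloring_def two_colours by blast
    show "adj G u v \<Longrightarrow> c u \<noteq> c v" for u v
      using packing_coloring_adj_neq[OF assms c] .
    show "c v \<noteq> 2" if "u \<noteq> v \<and> adj G u w \<and> adj G w v \<and> c u = 2" for u v w
    proof
      assume "c v = 2"
      moreover have "u \<in> verts G" "v \<in> verts G"
        using that adj_in_verts[OF assms] by blast+
      ultimately have "enat (c u) < dist G u v"
        using c that unfolding packing_coloring_def by auto
      then show False
        using separated[of u v] that by auto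
    qed
  next
    assume rhs: "(\<forall>v\<in>verts G. c v \<in> {1, 2}) \<and> (\<forall>u v. adj G u v \<longrightarrow> c u \<noteq> c v) \<and>
      (\<forall>u v w. u \<noteq> v \<and> adj G u w \<and> adj G w v \<and> c u = 2 \<longrightarrow> c v \<noteq> 2)"
    then show "packing_coloring G 2 c"
      unfolding packing_coloring_def two_colours using separated by metis
  qed
qed

definition has_triangle :: "'a graph \<Rightarrow> bool" where
  "has_triangle G \<longleftrightarrow> (\<exists>a b c. distinct [a, b, c] \<and> adj G a b \<and> adj G b c \<and> adj G a c)"

definition has_P4 :: "'a graph \<Rightarrow> bool" where
  "has_P4 G \<longleftrightarrow> (\<exists>a b c d. distinct [a, b, c, d] \<and> adj G a b \<and> adj G b c \<and> adj G c d)"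

lemma no_packing_coloring_2_if_has_triangle:
  assumes "graph G" "has_triangle G"
  shows "\<not> packing_coloring G 2 c"
proof
  assume c: "packing_coloring G 2 c"
  obtain a b d where abd: "adj G a b" "adj G b d" "adj G a d"
    using assms(2) unfolding has_triangle_def by blast
  then have "a \<in> verts G" "b \<in> verts G" "d \<in> verts G"
    using adj_in_verts[OF assms(1)] by blast+
  then have "c a \<in> {1, 2}" "c b \<in> {1, 2}" "c d \<in> {1, 2}"
    using c unfolding packing_coloring_2_iff[OF assms(1)] by blast+
  moreover have "c a \<noteq> c b" "c b \<noteq> c d" "c a \<noteq> c d"
    using c abd unfolding packing_coloring_2_iff[OF assms(1)] by blast+
  ultimately show False
    by auto
qed

lemma no_packing_coloring_2_if_has_P4:
  assumes "graph G" "has_P4 G"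
  shows "\<not> packing_coloring G 2 c"
proof
  assume c: "packing_coloring G 2 c"
  obtain a b x d where P: "distinct [a, b, x, d]" "adj G a b" "adj G b x" "adj G x d"
    using assms(2) unfolding has_P4_def by blast
  then have "a \<in> verts G" "b \<in> verts G" "x \<in> verts G" "d \<in> verts G"
    using adj_in_verts[OF assms(1)] by blast+
  moreover have "c a \<noteq> c b" "c b \<noteq> c x" "c x \<noteq> c d"
    using c P unfolding packing_coloring_2_iff[OF assms(1)] by blast+
  moreover have "c a \<in> {1, 2}" "c b \<in> {1, 2}" "c x \<in> {1, 2}" "c d \<in> {1, 2}"
    using c \<open>a \<in> verts G\<close> \<open>b \<in> verts G\<close> \<open>x \<in> verts G\<close> \<open>d \<in> verts G\<close>
    unfolding packing_coloring_2_iff[OF assms(1)] by blast+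
  ultimately have "c a = 2 \<and> c x = 2 \<or> c b = 2 \<and> c d = 2"
    by auto
  moreover have "a \<noteq> x" "b \<noteq> d"
    using P(1) by auto
  ultimately show False
    using c P unfolding packing_coloring_2_iff[OF assms(1)] by blast
qed

lemma leaf_if_adj_branch_vertex:
  assumes "graph G" "\<not> has_triangle G" "\<not> has_P4 G"
    and "adj G v x" "adj G v y" "x \<noteq> y" "adj G x z"
  shows "z = v"
proof (rule ccontr)
  assume "z \<noteq> v"
  have "v \<noteq> x" "v \<noteq> y" "x \<noteq> z"
    using assms adj_irrefl by metis+
  show False
  proof (cases "z = y")
    case True
    then have "distinct [v, x, y] \<and> adj G v x \<and> adj G x y \<and> adj G v y"
      using assms \<open>v \<noteq> x\<close> \<open>v \<noteq> y\<close> by simp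
    then show False
      using assms(2) unfolding has_triangle_def by blast
  next
    case False
    then have "distinct [z, x, v, y] \<and> adj G z x \<and> adj G x v \<and> adj G v y"
      using assms \<open>z \<noteq> v\<close> \<open>v \<noteq> x\<close> \<open>v \<noteq> y\<close> \<open>x \<noteq> z\<close>
      by (simp add: adj_sym[of G x z] adj_sym[of G v x])
    then show False
      using assms(3) unfolding has_P4_def by blast
  qed
qed

lemma packing_coloring_2_if_triangle_P4_free:
  assumes G: "graph G" and "\<not> has_triangle G" "\<not> has_P4 G"
  shows "\<exists>c. packing_coloring G 2 c"
proof -
  note leaf = leaf_if_adj_branch_vertex[OF assms]
  obtain f :: "'a \<Rightarrow> nat" where f: "inj_on f (verts G)"
    using G finite_imp_inj_to_nat_seg unfolding graph_def by metis
  \<comment> \<open>The components are stars. Colour 2 goes to their centres: the vertices with two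
    neighbours and, on an isolated edge, the endpoint with the smaller value of f.\<close>
  define branch where "branch v \<longleftrightarrow> (\<exists>x y. x \<noteq> y \<and> adj G v x \<and> adj G v y)" for v
  define centre where
    "centre v \<longleftrightarrow> branch v \<or> (\<exists>w. adj G v w \<and> \<not> branch v \<and> \<not> branch w \<and> f v < f w)" for v
  have only_nb: "w = x" if "\<not> branch v" "adj G v w" "adj G v x" for v w x
    using that unfolding branch_def by blast
  have no_adj_leaves: "centre u \<or> centre v" if "adj G u v" for u v
  proof -
    have "u \<noteq> v" "u \<in> verts G" "v \<in> verts G"
      using that adj_irrefl[OF G] adj_in_verts[OF G] by metis+
    then have "f u < f v \<or> f v < f u"
      using f by (metis inj_on_contraD linorder_neqE_nat)
    then show ?thesis
      using that adj_sym unfolding centre_def by metis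
  qed
  have no_adj_centres: "\<not> (centre u \<and> centre v)" if "adj G u v" for u v
  proof
    assume uv: "centre u \<and> centre v"
    show False
    proof (cases "branch u \<or> branch v")
      case True
      then show False
        using uv that adj_sym leaf only_nb unfolding centre_def branch_def by metis
    next
      case False
      then show False
        using uv that adj_sym only_nb unfolding centre_def by (metis less_asym)
    qed
  qed
  have no_common_nb: "\<not> (centre u \<and> centre v)"
    if "u \<noteq> v" "adj G u w" "adj G w v" for u v w
  proof
    assume "centre u \<and> centre v"
    moreover have "branch w"
      using that adj_sym unfolding branch_def by metis
    moreover have "z = w" if "adj G u z" for z
      using that \<open>u \<noteq> v\<close> \<open>adj G u w\<close> \<open>adj G w v\<close> leaf by metis
    ultimately show False
      using that(1) unfolding centre_def branch_def by metis
  qed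
  define c where "c v = (if centre v then 2 else 1 :: nat)" for v
  have "packing_coloring G 2 c"
    unfolding packing_coloring_2_iff[OF G] c_def
    using no_adj_leaves no_adj_centres no_common_nb by auto
  then show ?thesis by blast
qed

lemma chi_rho_le_2_iff:
  assumes "graph G"
  shows "chi_rho G \<le> 2 \<longleftrightarrow> \<not> has_triangle G \<and> \<not> has_P4 G"
  using chi_rho_le_iff[OF assms] packing_coloring_2_if_triangle_P4_free[OF assms]
    no_packing_coloring_2_if_has_triangle[OF assms] no_packing_coloring_2_if_has_P4[OF assms]
  by blast

section \<open>Critical graphs\<close>

lemma verts_pair [simp]: "verts (V, E) = V"
  and edges_pair [simp]: "edges (V, E) = E"
  by (simp_all add: verts_def edges_def)

lemma graph_eqI: "verts H = verts G \<Longrightarrow> edges H = edges G \<Longrightarrow> H = G"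
  by (simp add: verts_def edges_def prod_eq_iff)

lemma finite_edges: "graph G \<Longrightarrow> finite (edges G)"
  unfolding graph_def by (auto intro: finite_subset[of _ "Pow (verts G)"])

lemma three_le_card_edges:
  assumes "graph G" "has_triangle G \<or> has_P4 G"
  shows "3 \<le> card (edges G)"
proof -
  obtain e1 e2 e3 where "distinct [e1, e2, e3]" "{e1, e2, e3} \<subseteq> edges G"
  proof (cases "has_triangle G")
    case True
    then obtain a b c where "distinct [a, b, c]" "adj G a b" "adj G b c" "adj G a c"
      unfolding has_triangle_def by blast
    then show ?thesis
      by (intro that[of "{a, b}" "{b, c}" "{a, c}"]) (auto simp: adj_def doubleton_eq_iff)
  next
    case False
    then obtain a b c d where "distinct [a, b, c, d]" "adj G a b" "adj G b c" "adj G c d"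
      using assms(2) unfolding has_P4_def by blast
    then show ?thesis
      by (intro that[of "{a, b}" "{b, c}" "{c, d}"]) (auto simp: adj_def doubleton_eq_iff)
  qed
  moreover from this(1) have "card {e1, e2, e3} = 3"
    by simp
  ultimately show ?thesis
    using card_mono[OF finite_edges[OF assms(1)]] by metis
qed

lemma critical_subgraph_eq:
  "chi_rho_critical G \<Longrightarrow> subgraph H G \<Longrightarrow> chi_rho G \<le> chi_rho H \<Longrightarrow> H = G"
  unfolding chi_rho_critical_def by (meson not_le)

lemma chi_rho_critical_if_edges_minimal:
  assumes "graph G" and no_isolated: "\<forall>v\<in>verts G. \<exists>u. adj G v u"
    and minimal: "\<And>H. subgraph H G \<Longrightarrow> chi_rho G \<le> chi_rho H \<Longrightarrow> edges G \<subseteq> edges H"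
  shows "chi_rho_critical G"
  unfolding chi_rho_critical_def
proof (intro conjI allI impI assms(1))
  fix H assume H: "subgraph H G \<and> H \<noteq> G"
  then have "graph H"
    unfolding subgraph_def by blast
  show "chi_rho H < chi_rho G"
  proof (rule ccontr)
    assume "\<not> chi_rho H < chi_rho G"
    then have "edges G \<subseteq> edges H"
      using H minimal by (simp add: not_less)
    with H have "edges H = edges G"
      unfolding subgraph_def by blast
    moreover have "verts G \<subseteq> verts H"
    proof
      fix v assume "v \<in> verts G"
      then obtain u where "adj G v u"
        using no_isolated by blast
      then have "adj H v u"
        using \<open>edges H = edges G\<close> by (simp add: adj_def)
      then show "v \<in> verts H"
        using adj_in_verts[OF \<open>graph H\<close>] by blast
    qed
    ultimately have "H = G"
      using H by (intro graph_eqI) (auto simp: subgraph_def)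
    with H show False by blast
  qed
qed

definition single_edge :: "'a \<Rightarrow> 'a \<Rightarrow> 'a graph" where
  "single_edge u v = ({u, v}, {{u, v}})"

definition triangle :: "'a \<Rightarrow> 'a \<Rightarrow> 'a \<Rightarrow> 'a graph" where
  "triangle a b c = ({a, b, c}, {{a, b}, {b, c}, {a, c}})"

definition path4 :: "'a \<Rightarrow> 'a \<Rightarrow> 'a \<Rightarrow> 'a \<Rightarrow> 'a graph" where
  "path4 a b c d = ({a, b, c, d}, {{a, b}, {b, c}, {c, d}})"

lemma graph_single_edge: "u \<noteq> v \<Longrightarrow> graph (single_edge u v)"
  by (auto simp: graph_def single_edge_def)

lemma graph_triangle: "distinct [a, b, c] \<Longrightarrow> graph (triangle a b c)"
  by (auto simp: graph_def triangle_def)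

lemma graph_path4: "distinct [a, b, c, d] \<Longrightarrow> graph (path4 a b c d)"
  by (auto simp: graph_def path4_def)

lemma has_triangle_triangle: "distinct [a, b, c] \<Longrightarrow> has_triangle (triangle a b c)"
  unfolding has_triangle_def triangle_def adj_def
  by (intro exI[of _ a] exI[of _ b] exI[of _ c]) simp

lemma has_P4_path4: "distinct [a, b, c, d] \<Longrightarrow> has_P4 (path4 a b c d)"
  unfolding has_P4_def path4_def adj_def
  by (intro exI[of _ a] exI[of _ b] exI[of _ c] exI[of _ d]) simp

lemma k_chi_rho_critical_2_single_edge:
  assumes "u \<noteq> v"
  shows "k_chi_rho_critical 2 (single_edge u v)"
proof -
  let ?K = "single_edge u v"
  have K: "graph ?K"
    using assms by (rule graph_single_edge)
  have "packing_coloring ?K 2 (\<lambda>x. if x = u then 1 else 2)"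
    using assms by (intro packing_coloring_if_inj) (auto simp: single_edge_def inj_on_def)
  then have "chi_rho ?K \<le> 2"
    using chi_rho_le_iff[OF K] by blast
  moreover have "\<not> chi_rho ?K \<le> 1"
    using chi_rho_le_1_iff[OF K] by (simp add: single_edge_def)
  ultimately have chi: "chi_rho ?K = 2"
    by linarith
  have "chi_rho_critical ?K"
  proof (rule chi_rho_critical_if_edges_minimal[OF K])
    have "adj ?K u v" "adj ?K v u"
      by (simp_all add: single_edge_def adj_def doubleton_eq_iff)
    then show "\<forall>x\<in>verts ?K. \<exists>y. adj ?K x y"
      unfolding single_edge_def verts_pair by blast
    fix H assume H: "subgraph H ?K" "chi_rho ?K \<le> chi_rho H"
    then have "edges H \<noteq> {}"
      using chi chi_rho_le_1_iff[of H] unfolding subgraph_def by auto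
    with H(1) show "edges ?K \<subseteq> edges H"
      unfolding subgraph_def single_edge_def by auto
  qed
  with chi show ?thesis
    unfolding k_chi_rho_critical_def by blast
qed

lemma k_chi_rho_critical_2_iff:
  assumes "graph G"
  shows "k_chi_rho_critical 2 G \<longleftrightarrow> (\<exists>u v. u \<noteq> v \<and> G = single_edge u v)"
proof
  assume crit: "k_chi_rho_critical 2 G"
  then have "edges G \<noteq> {}"
    using chi_rho_le_1_iff[OF assms] unfolding k_chi_rho_critical_def by auto
  then obtain e where "e \<in> edges G"
    by blast
  then obtain u v where uv: "u \<noteq> v" "u \<in> verts G" "v \<in> verts G" "{u, v} \<in> edges G"
    using assms unfolding graph_def by metis
  have K: "graph (single_edge u v)"
    using uv(1) by (rule graph_single_edge)
  with uv have "subgraph (single_edge u v) G"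
    by (auto simp: subgraph_def single_edge_def)
  moreover have "chi_rho G \<le> chi_rho (single_edge u v)"
    using crit chi_rho_le_1_iff[OF K] by (simp add: single_edge_def k_chi_rho_critical_def)
  ultimately have "single_edge u v = G"
    using crit critical_subgraph_eq unfolding k_chi_rho_critical_def by blast
  with uv show "\<exists>u v. u \<noteq> v \<and> G = single_edge u v"
    by blast
next
  assume "\<exists>u v. u \<noteq> v \<and> G = single_edge u v"
  then show "k_chi_rho_critical 2 G"
    by (auto simp: k_chi_rho_critical_2_single_edge)
qed

lemma k_chi_rho_critical_3_if:
  assumes G: "graph G" and obstruction: "has_triangle G \<or> has_P4 G"
    and "packing_coloring G 3 c" "card (edges G) = 3" "\<forall>v\<in>verts G. \<exists>u. adj G v u"
  shows "k_chi_rho_critical 3 G"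
proof -
  have "chi_rho G \<le> 3"
    using assms(3) chi_rho_le_iff[OF G] by blast
  moreover have "\<not> chi_rho G \<le> 2"
    using obstruction chi_rho_le_2_iff[OF G] by blast
  ultimately have chi: "chi_rho G = 3"
    by linarith
  moreover have "chi_rho_critical G"
  proof (rule chi_rho_critical_if_edges_minimal[OF G assms(5)])
    fix H assume H: "subgraph H G" "chi_rho G \<le> chi_rho H"
    then have "graph H" "edges H \<subseteq> edges G"
      unfolding subgraph_def by blast+
    moreover have "has_triangle H \<or> has_P4 H"
      using H(2) chi chi_rho_le_2_iff[OF \<open>graph H\<close>] by linarith
    ultimately have "card (edges G) \<le> card (edges H)"
      using three_le_card_edges assms(4) by metis
    then show "edges G \<subseteq> edges H"
      using card_seteq[OF finite_edges[OF G] \<open>edges H \<subseteq> edges G\<close>] by blast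
  qed
  ultimately show ?thesis
    unfolding k_chi_rho_critical_def by blast
qed

lemma k_chi_rho_critical_3_triangle:
  assumes "distinct [a, b, c]"
  shows "k_chi_rho_critical 3 (triangle a b c)"
proof (rule k_chi_rho_critical_3_if)
  show "graph (triangle a b c)"
    using assms by (rule graph_triangle)
  show "has_triangle (triangle a b c) \<or> has_P4 (triangle a b c)"
    using assms by (simp add: has_triangle_triangle)
  show "packing_coloring (triangle a b c) 3 (\<lambda>x. if x = a then 1 else if x = b then 2 else 3)"
    using assms by (intro packing_coloring_if_inj) (auto simp: triangle_def inj_on_def)
  show "card (edges (triangle a b c)) = 3"
    using assms by (auto simp: triangle_def card_insert_if doubleton_eq_iff)
  have "adj (triangle a b c) a b" "adj (triangle a b c) b c" "adj (triangle a b c) c a"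
    by (simp_all add: triangle_def adj_def doubleton_eq_iff)
  then show "\<forall>v\<in>verts (triangle a b c). \<exists>u. adj (triangle a b c) v u"
    unfolding triangle_def verts_pair by blast
qed

lemma k_chi_rho_critical_3_path4:
  assumes "distinct [a, b, c, d]"
  shows "k_chi_rho_critical 3 (path4 a b c d)"
proof (rule k_chi_rho_critical_3_if)
  let ?P = "path4 a b c d"
  show G: "graph ?P"
    using assms by (rule graph_path4)
  show "has_triangle ?P \<or> has_P4 ?P"
    using assms by (simp add: has_P4_path4)
  have "\<not> adj ?P a c" "\<not> adj ?P c a"
    using assms by (auto simp: path4_def adj_def doubleton_eq_iff)
  then have "enat 1 < dist ?P a c" "enat 1 < dist ?P c a"
    using assms dist_le_1_iff[OF G, of a c] dist_le_1_iff[OF G, of c a] by auto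
  then show "packing_coloring ?P 3 (\<lambda>x. if x = a then 1 else if x = b then 2 else if x = c then 1 else 3)"
    using assms unfolding packing_coloring_def by (auto simp: path4_def)
  show "card (edges ?P) = 3"
    using assms by (auto simp: path4_def card_insert_if doubleton_eq_iff)
  have "adj ?P a b" "adj ?P b c" "adj ?P c d" "adj ?P d c"
    by (simp_all add: path4_def adj_def doubleton_eq_iff)
  then show "\<forall>v\<in>verts ?P. \<exists>u. adj ?P v u"
    unfolding path4_def verts_pair by blast
qed

lemma k_chi_rho_critical_3_iff:
  assumes G: "graph G"
  shows "k_chi_rho_critical 3 G \<longleftrightarrow>
    (\<exists>a b c. distinct [a, b, c] \<and> G = triangle a b c) \<or>
    (\<exists>a b c d. distinct [a, b, c, d] \<and> G = path4 a b c d)"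
proof
  assume crit: "k_chi_rho_critical 3 G"
  then have "chi_rho_critical G" "chi_rho G = 3"
    unfolding k_chi_rho_critical_def by blast+
  have eq_G: "H = G" if "graph H" "verts H \<subseteq> verts G" "edges H \<subseteq> edges G"
    "has_triangle H \<or> has_P4 H" for H
  proof (rule critical_subgraph_eq[OF \<open>chi_rho_critical G\<close>])
    show "subgraph H G"
      using that unfolding subgraph_def by blast
    show "chi_rho G \<le> chi_rho H"
      using that \<open>chi_rho G = 3\<close> chi_rho_le_2_iff[of H] by linarith
  qed
  have "has_triangle G \<or> has_P4 G"
    using \<open>chi_rho G = 3\<close> chi_rho_le_2_iff[OF G] by linarith
  then show "(\<exists>a b c. distinct [a, b, c] \<and> G = triangle a b c) \<or>
    (\<exists>a b c d. distinct [a, b, c, d] \<and> G = path4 a b c d)"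
  proof
    assume "has_triangle G"
    then obtain a b c where abc: "distinct [a, b, c]" "adj G a b" "adj G b c" "adj G a c"
      unfolding has_triangle_def by blast
    moreover have "a \<in> verts G" "b \<in> verts G" "c \<in> verts G"
      using abc adj_in_verts[OF G] by blast+
    ultimately have "triangle a b c = G"
      by (intro eq_G graph_triangle disjI1 has_triangle_triangle) (auto simp: triangle_def adj_def)
    with abc(1) show ?thesis
      by blast
  next
    assume "has_P4 G"
    then obtain a b c d where abcd: "distinct [a, b, c, d]" "adj G a b" "adj G b c" "adj G c d"
      unfolding has_P4_def by blast
    moreover have "a \<in> verts G" "b \<in> verts G" "c \<in> verts G" "d \<in> verts G"
      using abcd adj_in_verts[OF G] by blast+
    ultimately have "path4 a b c d = G"
      by (intro eq_G graph_path4 disjI2 has_P4_path4) (auto simp: path4_def adj_def)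
    with abcd(1) show ?thesis
      by blast
  qed
next
  assume "(\<exists>a b c. distinct [a, b, c] \<and> G = triangle a b c) \<or>
    (\<exists>a b c d. distinct [a, b, c, d] \<and> G = path4 a b c d)"
  then show "k_chi_rho_critical 3 G"
    by (auto simp: k_chi_rho_critical_3_triangle k_chi_rho_critical_3_path4)
qed

section \<open>Isomorphism with K2, C3 and P4\<close>

definition graph_image :: "('b \<Rightarrow> 'a) \<Rightarrow> 'b graph \<Rightarrow> 'a graph" where
  "graph_image g H = (g ` verts H, (`) g ` edges H)"

lemma graph_iso_imp_image:
  assumes G: "graph G" and H: "graph H" and "graph_iso G H"
  shows "\<exists>g. inj_on g (verts H) \<and> G = graph_image g H"
proof -
  obtain f where f: "bij_betw f (verts G) (verts H)"
    and edge_iff: "\<forall>u\<in>verts G. \<forall>v\<in>verts G. {u, v} \<in> edges G \<longleftrightarrow> {f u, f v} \<in> edges H"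
    using assms(3) unfolding graph_iso_def by blast
  define g where "g = inv_into (verts G) f"
  have g: "bij_betw g (verts H) (verts G)"
    unfolding g_def using f by (rule bij_betw_inv_into)
  have f_g: "f (g x) = x" if "x \<in> verts H" for x
    unfolding g_def using f that by (meson bij_betw_inv_into_right)
  have g_f: "g (f x) = x" if "x \<in> verts G" for x
    unfolding g_def using f that by (meson bij_betw_inv_into_left)
  have "edges G \<subseteq> (`) g ` edges H"
  proof
    fix e assume "e \<in> edges G"
    then obtain x y where "e = {x, y}" "x \<in> verts G" "y \<in> verts G"
      using G unfolding graph_def by blast
    with \<open>e \<in> edges G\<close> have "{f x, f y} \<in> edges H" "e = g ` {f x, f y}"
      using edge_iff g_f by auto
    then show "e \<in> (`) g ` edges H"
      by blast
  qed
  moreover have "(`) g ` edges H \<subseteq> edges G"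
  proof
    fix e assume "e \<in> (`) g ` edges H"
    then obtain x y where "{x, y} \<in> edges H" "x \<in> verts H" "y \<in> verts H" "e = {g x, g y}"
      using H unfolding graph_def by auto
    moreover have "g x \<in> verts G" "g y \<in> verts G"
      using g \<open>x \<in> verts H\<close> \<open>y \<in> verts H\<close> bij_betwE by blast+
    ultimately show "e \<in> edges G"
      using edge_iff f_g by metis
  qed
  ultimately have "G = graph_image g H"
    using bij_betw_imp_surj_on[OF g]
    by (auto simp: graph_image_def verts_def edges_def prod_eq_iff)
  with g show ?thesis
    using bij_betw_imp_inj_on by blast
qed

lemma graph_iso_K2_iff:
  assumes "graph G"
  shows "graph_iso G K2 \<longleftrightarrow> (\<exists>u v. u \<noteq> v \<and> G = single_edge u v)"
proof
  assume "graph_iso G K2"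
  moreover have "graph K2"
    using graph_single_edge[of "0::nat" 1] by (simp add: K2_def single_edge_def)
  ultimately obtain g where "inj_on g (verts K2)" "G = graph_image g K2"
    using graph_iso_imp_image[OF assms] by blast
  then show "\<exists>u v. u \<noteq> v \<and> G = single_edge u v"
    by (intro exI[of _ "g 0"] exI[of _ "g 1"]) (auto simp: K2_def single_edge_def graph_image_def)
next
  assume "\<exists>u v. u \<noteq> v \<and> G = single_edge u v"
  then obtain u v where "u \<noteq> v" "G = single_edge u v"
    by blast
  then show "graph_iso G K2"
    unfolding graph_iso_def K2_def single_edge_def
    by (intro exI[of _ "\<lambda>x. if x = u then 0 else 1"])
      (auto simp: bij_betw_def inj_on_def doubleton_eq_iff)
qed

lemma graph_iso_C3_iff:
  assumes "graph G"
  shows "graph_iso G C3 \<longleftrightarrow> (\<exists>a b c. distinct [a, b, c] \<and> G = triangle a b c)"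
proof
  assume "graph_iso G C3"
  moreover have "graph C3"
    using graph_triangle[of "0::nat" 1 2] by (simp add: C3_def triangle_def)
  ultimately obtain g where "inj_on g (verts C3)" "G = graph_image g C3"
    using graph_iso_imp_image[OF assms] by blast
  then show "\<exists>a b c. distinct [a, b, c] \<and> G = triangle a b c"
    by (intro exI[of _ "g 0"] exI[of _ "g 1"] exI[of _ "g 2"])
      (auto simp: C3_def triangle_def graph_image_def inj_on_def)
next
  assume "\<exists>a b c. distinct [a, b, c] \<and> G = triangle a b c"
  then obtain a b c where "distinct [a, b, c]" "G = triangle a b c"
    by blast
  then show "graph_iso G C3"
    unfolding graph_iso_def C3_def triangle_def
    by (intro exI[of _ "\<lambda>x. if x = a then 0 else if x = b then 1 else 2"])
      (auto simp: bij_betw_def inj_on_def doubleton_eq_iff)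
qed

lemma graph_iso_P4_iff:
  assumes "graph G"
  shows "graph_iso G P4 \<longleftrightarrow> (\<exists>a b c d. distinct [a, b, c, d] \<and> G = path4 a b c d)"
proof
  assume "graph_iso G P4"
  moreover have "graph P4"
    using graph_path4[of "0::nat" 1 2 3] by (simp add: P4_def path4_def)
  ultimately obtain g where "inj_on g (verts P4)" "G = graph_image g P4"
    using graph_iso_imp_image[OF assms] by blast
  then show "\<exists>a b c d. distinct [a, b, c, d] \<and> G = path4 a b c d"
    by (intro exI[of _ "g 0"] exI[of _ "g 1"] exI[of _ "g 2"] exI[of _ "g 3"])
      (auto simp: P4_def path4_def graph_image_def inj_on_def)
next
  assume "\<exists>a b c d. distinct [a, b, c, d] \<and> G = path4 a b c d"
  then obtain a b c d where "distinct [a, b, c, d]" "G = path4 a b c d"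
    by blast
  then show "graph_iso G P4"
    unfolding graph_iso_def P4_def path4_def
    by (intro exI[of _ "\<lambda>x. if x = a then 0 else if x = b then 1 else if x = c then 2 else 3"])
      (auto simp: bij_betw_def inj_on_def doubleton_eq_iff)
qed

theorem proposition3p1:
  fixes G :: "'a graph"
  assumes "graph G"
  shows "(k_chi_rho_critical 2 G \<longleftrightarrow> graph_iso G K2) \<and>
         (k_chi_rho_critical 3 G \<longleftrightarrow> graph_iso G C3 \<or> graph_iso G P4)"
  using k_chi_rho_critical_2_iff[OF assms] graph_iso_K2_iff[OF assms]
    k_chi_rho_critical_3_iff[OF assms] graph_iso_C3_iff[OF assms] graph_iso_P4_iff[OF assms]
  by blast

end
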